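(* Let $n,d$ be positive integers such that $n$ or $d$ is odd. Then for all but finitely many primes $p$ (the exceptional set depending on $n$ and $d$), for every power $q$ of $p$, \[ \frac{1}{|\mathrm{Conf}_n(\mathbb{F}_q)|}\sum_{f\in \mathrm{Conf}_n(\mathbb{F}_q)} |X_f(\mathbb{F}_q)| = q . \]
   Context: $\mathrm{Conf}_n(\mathbb{F}_q)$ denotes the set of monic, square-free polynomials $f\in\mathbb{F}_q[x]$ of degree $n$ (square-free meaning distinct roots in $\overline{\mathbb{F}}_q$). For such $f$, $X_f$ is the affine curve $y^d=f(x)$ and $X_f(\mathbb{F}_q)=\{(x,y)\in\mathbb{F}_q^2: y^d=f(x)\}$. *)

theory Defs
  imports "HOL-Computational_Algebra.Primes" "HOL-Algebra.Polynomial_Divisibility"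
begin

text \<open>Over a finite (perfect) field this is equivalent to having distinct
 roots in an algebraic closure.\<close>
definition sqfree_poly :: "('a, 'b) ring_scheme \<Rightarrow> 'a list \<Rightarrow> bool" where
  "sqfree_poly R f \<longleftrightarrow>
     (\<forall>g \<in> carrier (poly_ring R).
        (g \<otimes>\<^bsub>poly_ring R\<^esub> g) divides\<^bsub>poly_ring R\<^esub> f \<longrightarrow> g \<in> Units (poly_ring R))"

definition Conf :: "('a, 'b) ring_scheme \<Rightarrow> nat \<Rightarrow> 'a list set" where
  "Conf R n = {f \<in> carrier (poly_ring R). degree f = n \<and> lead_coeff f = \<one>\<^bsub>R\<^esub> \<and> sqfree_poly R f}"

definition curve_points :: "('a, 'b) ring_scheme \<Rightarrow> nat \<Rightarrow> 'a list \<Rightarrow> ('a \<times> 'a) set" where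
  "curve_points R d f = {(x, y). x \<in> carrier R \<and> y \<in> carrier R \<and> y [^]\<^bsub>R\<^esub> d = ring.eval R f x}"

end

theory Submission
  imports Defs
begin

text \<open>
  Every monic polynomial factors uniquely as \<open>g\<^sup>2 h\<close> with \<open>g\<close> monic and \<open>h\<close> monic
  square-free. There are \<open>q\<^sup>m\<^sup>-\<^sup>1\<close> monic polynomials of degree \<open>m\<close> taking a given value
  \<open>c \<noteq> 0\<close> at a point \<open>x\<close>; counting them through this factorisation expresses
  \<open>B\<^sub>m(x, c)\<close>, the number of square-free monic \<open>h\<close> of degree \<open>m\<close> with \<open>h(x) = c\<close>,
  in terms of the sums \<open>\<Sum>\<^sub>b\<^sub>\<noteq>\<^sub>0 B\<^sub>k(x, c/b\<^sup>2)\<close> with \<open>k < m\<close>. These sums do not change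
  when \<open>c\<close> is multiplied by a nonzero square, hence neither does \<open>B\<^sub>m(x, c)\<close>; and for odd
  \<open>m\<close> all the \<open>k\<close> involved are odd, so by induction \<open>B\<^sub>m(x, c)\<close> is the same for all
  \<open>c \<noteq> 0\<close>. Either way \<open>B\<^sub>n(x, y\<^sup>d) = B\<^sub>n(x, y)\<close> for all \<open>y\<close> when \<open>n\<close> or \<open>d\<close> is odd,
  so \<open>\<Sum>\<^sub>f |X\<^sub>f(\<bbbF>\<^sub>q)| = \<Sum>\<^sub>x \<Sum>\<^sub>y B\<^sub>n(x, y\<^sup>d) = \<Sum>\<^sub>x \<Sum>\<^sub>y B\<^sub>n(x, y) = q |Conf\<^sub>n(\<bbbF>\<^sub>q)|\<close>.
  In particular no prime has to be excluded.
\<close>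

definition monic_polys :: "('a, 'b) ring_scheme \<Rightarrow> nat \<Rightarrow> 'a list set" where
  "monic_polys R m =
     {f \<in> carrier (poly_ring R). f \<noteq> [] \<and> degree f = m \<and> lead_coeff f = \<one>\<^bsub>R\<^esub>}"

definition sqfree_monic_polys :: "('a, 'b) ring_scheme \<Rightarrow> nat \<Rightarrow> 'a list set" where
  "sqfree_monic_polys R m = {f \<in> monic_polys R m. sqfree_poly R f}"

definition square_sqfree_pairs :: "('a, 'b) ring_scheme \<Rightarrow> nat \<Rightarrow> ('a list \<times> 'a list) set" where
  "square_sqfree_pairs R m = (\<Union>j\<le>m div 2. monic_polys R j \<times> sqfree_monic_polys R (m - 2 * j))"

definition sqfree_value_count :: "('a, 'b) ring_scheme \<Rightarrow> nat \<Rightarrow> 'a \<Rightarrow> 'a \<Rightarrow> nat" where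
  "sqfree_value_count R m x c = card {h \<in> sqfree_monic_polys R m. ring.eval R h x = c}"

definition square_scaled_count :: "('a, 'b) ring_scheme \<Rightarrow> nat \<Rightarrow> 'a \<Rightarrow> 'a \<Rightarrow> nat" where
  "square_scaled_count R m x c =
     (\<Sum>b \<in> Units R. sqfree_value_count R m x (c \<otimes>\<^bsub>R\<^esub> inv\<^bsub>R\<^esub> (b \<otimes>\<^bsub>R\<^esub> b)))"

lemma Conf_eq_sqfree_monic_polys: "n > 0 \<Longrightarrow> Conf R n = sqfree_monic_polys R n"
  unfolding Conf_def sqfree_monic_polys_def monic_polys_def by auto

lemma sum_card_filter_swap:
  assumes "finite A" "finite B"
  shows "(\<Sum>a \<in> A. card {b \<in> B. Q a b}) = (\<Sum>b \<in> B. card {a \<in> A. Q a b})"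
proof -
  have "(\<Sum>a \<in> A. card {b \<in> B. Q a b}) = (\<Sum>a \<in> A. \<Sum>b \<in> B. if Q a b then 1 else 0)"
    using assms by (simp add: sum.inter_filter[symmetric])
  also have "\<dots> = (\<Sum>b \<in> B. \<Sum>a \<in> A. if Q a b then 1 else 0)" by (rule sum.swap)
  also have "\<dots> = (\<Sum>b \<in> B. card {a \<in> A. Q a b})"
    using assms by (simp add: sum.inter_filter[symmetric])
  finally show ?thesis .
qed

lemma (in comm_monoid) prime_associated:
  assumes "prime G b" "p divides b" "b divides p" "p \<in> carrier G" "b \<in> carrier G"
  shows "prime G p"
proof (rule primeI)
  show "p \<notin> Units G" using assms divides_unit by (auto simp: prime_def)
  show "p divides x \<or> p divides y" if "x \<in> carrier G" "y \<in> carrier G" "p divides x \<otimes> y" for x y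
  proof -
    have "b divides x \<otimes> y" using divides_trans[OF assms(3) that(3) assms(5)] .
    then have "b divides x \<or> b divides y" using assms(1) that(1,2) by (simp add: prime_def)
    then show ?thesis using divides_trans[OF assms(2) _ assms(4)] by blast
  qed
qed

sublocale field \<subseteq> UP: principal_domain "poly_ring R"
  using univ_poly_is_principal[OF carrier_is_subfield] .

context field
begin

abbreviation poly_times (infixl "\<star>" 70) where "p \<star> q \<equiv> p \<otimes>\<^bsub>poly_ring R\<^esub> q"

lemma poly_ring_carrier_iff: "p \<in> carrier (poly_ring R) \<longleftrightarrow> polynomial (carrier R) p"
  by (simp add: univ_poly_carrier)

lemma poly_times_nonzero:
  assumes "p \<in> carrier (poly_ring R)" "q \<in> carrier (poly_ring R)" "p \<noteq> []" "q \<noteq> []"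
  shows "p \<star> q \<noteq> []" "degree (p \<star> q) = degree p + degree q"
    "lead_coeff (p \<star> q) = lead_coeff p \<otimes> lead_coeff q"
  using poly_mult_integral[OF carrier_is_subring, of p q]
    poly_mult_degree_eq[OF carrier_is_subring, of p q]
    poly_mult_lead_coeff[OF carrier_is_subring, of p q] assms
  by (auto simp: univ_poly_mult poly_ring_carrier_iff)

lemma const_poly_times_const:
  "a \<in> carrier R - {\<zero>} \<Longrightarrow> b \<in> carrier R - {\<zero>} \<Longrightarrow> [a] \<star> [b] = [a \<otimes> b]"
  using poly_mult_const(1)[OF carrier_is_subring, of "[b]" a]
  by (auto simp: univ_poly_mult polynomial_def)

lemma lead_coeff_nonzero:
  "p \<in> carrier (poly_ring R) \<Longrightarrow> p \<noteq> [] \<Longrightarrow> lead_coeff p \<in> carrier R - {\<zero>}"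
  by (cases p) (auto simp: poly_ring_carrier_iff polynomial_def)

lemma poly_ring_one: "\<one>\<^bsub>poly_ring R\<^esub> = [\<one>]"
  by (simp add: univ_poly_one)

lemma poly_ring_zero: "\<zero>\<^bsub>poly_ring R\<^esub> = []"
  by (simp add: univ_poly_zero)

lemma monic_polys_carrier: "f \<in> monic_polys R m \<Longrightarrow> f \<in> carrier (poly_ring R)"
  by (simp add: monic_polys_def)

lemma monic_polys_mem:
  "f \<in> monic_polys R m \<longleftrightarrow> f \<noteq> [] \<and> set f \<subseteq> carrier R \<and> length f = Suc m \<and> hd f = \<one>"
  by (cases f) (auto simp: monic_polys_def poly_ring_carrier_iff polynomial_def)

lemma monic_polys_0: "monic_polys R 0 = {[\<one>]}"
  by (auto simp: monic_polys_mem length_Suc_conv)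

lemma monic_polys_disjoint: "j \<noteq> j' \<Longrightarrow> monic_polys R j \<inter> monic_polys R j' = {}"
  by (auto simp: monic_polys_def)

lemma monic_polys_mult:
  "g \<in> monic_polys R a \<Longrightarrow> h \<in> monic_polys R b \<Longrightarrow> g \<star> h \<in> monic_polys R (a + b)"
  using poly_times_nonzero[of g h] UP.m_closed[of g h] by (auto simp: monic_polys_def)

lemma monic_polys_factor:
  assumes "g \<in> monic_polys R a" "k \<in> carrier (poly_ring R)" "g \<star> k \<in> monic_polys R b"
  shows "a \<le> b \<and> k \<in> monic_polys R (b - a)"
proof -
  have k: "k \<noteq> []"
    using assms UP.r_null[of g] by (auto simp: monic_polys_def poly_ring_zero)
  have g: "g \<in> carrier (poly_ring R)" "g \<noteq> []" using assms(1) by (simp_all add: monic_polys_def)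
  have "b = a + degree k" "\<one> = \<one> \<otimes> lead_coeff k"
    using poly_times_nonzero[OF g(1) assms(2) g(2) k] assms(1,3) by (simp_all add: monic_polys_def)
  then show ?thesis
    using assms(2) k lead_coeff_nonzero[OF assms(2) k] by (simp add: monic_polys_def)
qed

lemma monic_polys_Units_iff: "f \<in> monic_polys R m \<Longrightarrow> f \<in> Units (poly_ring R) \<longleftrightarrow> m = 0"
  by (simp add: monic_polys_def univ_poly_units'[OF carrier_is_subfield])

lemma monic_associate:
  assumes a: "a \<in> carrier (poly_ring R)" "a \<noteq> []"
  obtains a' where "a' \<in> monic_polys R (degree a)"
    "a' divides\<^bsub>poly_ring R\<^esub> a" "a divides\<^bsub>poly_ring R\<^esub> a'"
proof
  define u where "u = lead_coeff a"
  have u: "u \<in> carrier R - {\<zero>}" "inv u \<in> carrier R - {\<zero>}" "u \<otimes> inv u = \<one>"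
    using lead_coeff_nonzero[OF a] field_Units unfolding u_def by auto
  have const_polys: "[u] \<in> carrier (poly_ring R)" "[inv u] \<in> carrier (poly_ring R)"
    using u by (auto simp: poly_ring_carrier_iff polynomial_def)
  show "[inv u] \<star> a \<in> monic_polys R (degree a)"
    using poly_times_nonzero[of "[inv u]" a] const_polys a u u_def field_Units
    by (auto simp: monic_polys_def)
  have "[u] \<star> ([inv u] \<star> a) = a"
    using const_poly_times_const[of u "inv u"] const_polys a u
    by (simp add: UP.m_assoc[symmetric] poly_ring_one[symmetric])
  then show "[inv u] \<star> a divides\<^bsub>poly_ring R\<^esub> a"
    using UP.m_comm[OF const_polys(1) UP.m_closed[OF const_polys(2) a(1)]]
    by (intro dividesI[OF const_polys(1)]) simp
  show "a divides\<^bsub>poly_ring R\<^esub> [inv u] \<star> a"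
    using UP.m_comm[OF const_polys(2) a(1)] by (intro dividesI[OF const_polys(2)]) simp
qed

lemma monic_prime_divisor:
  assumes a: "a \<in> carrier (poly_ring R)" "a \<noteq> []" "a \<notin> Units (poly_ring R)"
  obtains p where "p \<in> monic_polys R (degree p)" "degree p > 0"
    "ring_prime\<^bsub>poly_ring R\<^esub> p" "p divides\<^bsub>poly_ring R\<^esub> a"
proof -
  have "a \<in> carrier (poly_ring R) - {\<zero>\<^bsub>poly_ring R\<^esub>}" using a by (simp add: poly_ring_zero)
  then obtain b where b: "b \<in> carrier (poly_ring R)" "ring_irreducible\<^bsub>poly_ring R\<^esub> b"
    "b divides\<^bsub>poly_ring R\<^esub> a"
    using UP.exists_irreducible_divisor a(3) by blast
  have "ring_prime\<^bsub>poly_ring R\<^esub> b"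
    using UP.primeness_condition[OF b(1)] b(2) by blast
  then have b_nonzero: "b \<noteq> []" and b_prime: "prime (poly_ring R) b"
    using UP.ring_primeE[OF b(1)] by (simp_all add: poly_ring_zero)
  obtain p where p: "p \<in> monic_polys R (degree b)"
    "p divides\<^bsub>poly_ring R\<^esub> b" "b divides\<^bsub>poly_ring R\<^esub> p"
    using monic_associate[OF b(1) b_nonzero] by blast
  have pc: "p \<in> carrier (poly_ring R)" using p(1) by (rule monic_polys_carrier)
  have p_monic: "p \<noteq> []" "degree p = degree b" using p(1) by (simp_all add: monic_polys_def)
  have p_prime: "prime (poly_ring R) p" using UP.prime_associated[OF b_prime p(2,3) pc b(1)] .
  then have "ring_prime\<^bsub>poly_ring R\<^esub> p"
    using p_monic(1) by (intro UP.ring_primeI) (simp_all add: poly_ring_zero)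
  moreover have "degree p > 0"
    using p_prime monic_polys_Units_iff[OF p(1)] p_monic(2) by (auto simp: prime_def)
  moreover have "p \<in> monic_polys R (degree p)" using p(1) p_monic(2) by simp
  moreover have "p divides\<^bsub>poly_ring R\<^esub> a" using UP.divides_trans[OF p(2) b(3) pc] .
  ultimately show ?thesis using that by blast
qed

lemma sqfree_monic_polys_subset: "sqfree_monic_polys R m \<subseteq> monic_polys R m"
  by (simp add: sqfree_monic_polys_def)

lemma ring_prime_square_divides:
  assumes p: "ring_prime\<^bsub>poly_ring R\<^esub> p" "p \<in> carrier (poly_ring R)"
    and gh: "g \<in> carrier (poly_ring R)" "h \<in> carrier (poly_ring R)" "sqfree_poly R h"
    and dvd: "(p \<star> p) divides\<^bsub>poly_ring R\<^esub> g \<star> g \<star> h"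
  shows "p divides\<^bsub>poly_ring R\<^esub> g"
proof (rule ccontr)
  assume not_dvd: "\<not> p divides\<^bsub>poly_ring R\<^esub> g"
  have p_prime: "p \<noteq> \<zero>\<^bsub>poly_ring R\<^esub>" "prime (poly_ring R) p"
    using UP.ring_primeE[OF p(2) p(1)] by auto
  have divides_factor: "p divides\<^bsub>poly_ring R\<^esub> y"
    if "y \<in> carrier (poly_ring R)" "p divides\<^bsub>poly_ring R\<^esub> g \<star> g \<star> y" for y
    using p_prime(2) that gh(1) not_dvd unfolding prime_def by (meson UP.m_closed)
  obtain k where k: "k \<in> carrier (poly_ring R)" "g \<star> g \<star> h = p \<star> p \<star> k"
    using dvd unfolding factor_def by blast
  have "p divides\<^bsub>poly_ring R\<^esub> g \<star> g \<star> h"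
    using k p(2) by (intro dividesI[of "p \<star> k"]) (simp_all add: UP.m_assoc)
  then have "p divides\<^bsub>poly_ring R\<^esub> h" by (rule divides_factor[OF gh(2)])
  then obtain c where c: "c \<in> carrier (poly_ring R)" "h = p \<star> c" unfolding factor_def by blast
  have "p \<star> (p \<star> k) = p \<star> (g \<star> g \<star> c)" using k c gh p(2) by (simp add: UP.m_ac)
  then have "p \<star> k = g \<star> g \<star> c" using k c gh p(2) by (simp add: UP.m_lcancel[OF p_prime(1) p(2)])
  then have "p divides\<^bsub>poly_ring R\<^esub> g \<star> g \<star> c" using k by (intro dividesI[of k]) simp_all
  then have "p divides\<^bsub>poly_ring R\<^esub> c" by (rule divides_factor[OF c(1)])
  then obtain e where e: "e \<in> carrier (poly_ring R)" "c = p \<star> e" unfolding factor_def by blast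
  have "(p \<star> p) divides\<^bsub>poly_ring R\<^esub> h" using c e p(2) by (intro dividesI[of e]) (auto simp: UP.m_assoc)
  then have "p \<in> Units (poly_ring R)" using gh(3) p(2) unfolding sqfree_poly_def by blast
  then show False using p_prime(2) by (auto elim: primeE)
qed

lemma monic_polys_square_prime_factor:
  assumes f: "f \<in> monic_polys R m" and not_sqfree: "\<not> sqfree_poly R f"
  obtains p k where "p \<in> monic_polys R (degree p)" "degree p > 0" "degree p \<le> m - degree p"
    "k \<in> monic_polys R (m - degree p - degree p)" "f = p \<star> p \<star> k"
proof -
  have fc: "f \<in> carrier (poly_ring R)" "f \<noteq> []" using f by (auto simp: monic_polys_def)
  obtain a where a: "a \<in> carrier (poly_ring R)" "(a \<star> a) divides\<^bsub>poly_ring R\<^esub> f"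
    "a \<notin> Units (poly_ring R)"
    using not_sqfree unfolding sqfree_poly_def by blast
  have "a \<star> a \<noteq> \<zero>\<^bsub>poly_ring R\<^esub>"
  proof
    assume "a \<star> a = \<zero>\<^bsub>poly_ring R\<^esub>"
    then have "f = \<zero>\<^bsub>poly_ring R\<^esub>" using a(2) UP.zero_divides by metis
    then show False using fc(2) by (simp add: poly_ring_zero)
  qed
  then have "a \<noteq> []" using UP.l_null[OF UP.zero_closed] by (auto simp: poly_ring_zero)
  then obtain p where p: "p \<in> monic_polys R (degree p)" "degree p > 0"
    "p divides\<^bsub>poly_ring R\<^esub> a"
    using monic_prime_divisor[OF a(1) _ a(3)] by blast
  have pc: "p \<in> carrier (poly_ring R)" using p(1) by (rule monic_polys_carrier)
  obtain r where r: "r \<in> carrier (poly_ring R)" "a = p \<star> r" using p(3) unfolding factor_def by blast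
  obtain k where k: "k \<in> carrier (poly_ring R)" "f = a \<star> a \<star> k" using a(2) unfolding factor_def by blast
  have k'c: "r \<star> r \<star> k \<in> carrier (poly_ring R)" using r k by simp
  have "f = p \<star> (p \<star> (r \<star> r \<star> k))" using k r pc by (simp add: UP.m_ac)
  then have "degree p \<le> m \<and> p \<star> (r \<star> r \<star> k) \<in> monic_polys R (m - degree p)"
    using monic_polys_factor[OF p(1), of "p \<star> (r \<star> r \<star> k)" m] f pc k'c by simp
  then have "degree p \<le> m - degree p \<and> r \<star> r \<star> k \<in> monic_polys R (m - degree p - degree p)"
    using monic_polys_factor[OF p(1) k'c] by blast
  moreover have "f = p \<star> p \<star> (r \<star> r \<star> k)" using k r pc by (simp add: UP.m_ac)
  ultimately show ?thesis using that p(1,2) by blast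
qed

lemma square_sqfree_decomposition_exists:
  assumes "f \<in> monic_polys R m"
  shows "\<exists>g h j. 2 * j \<le> m \<and> g \<in> monic_polys R j \<and> h \<in> sqfree_monic_polys R (m - 2 * j)
           \<and> f = g \<star> g \<star> h"
  using assms
proof (induction m arbitrary: f rule: less_induct)
  case (less m f)
  show ?case
  proof (cases "sqfree_poly R f")
    case True
    then have "f \<in> sqfree_monic_polys R m" using less.prems by (simp add: sqfree_monic_polys_def)
    moreover have "[\<one>] \<star> [\<one>] \<star> f = f"
      using monic_polys_carrier[OF less.prems] by (simp add: poly_ring_one[symmetric])
    ultimately show ?thesis
      using monic_polys_0 by (intro exI[of _ "[\<one>]"] exI[of _ f] exI[of _ 0]) simp
  next
    case False
    then obtain p k where p: "p \<in> monic_polys R (degree p)" "degree p > 0" "degree p \<le> m - degree p"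
      and k: "k \<in> monic_polys R (m - degree p - degree p)" "f = p \<star> p \<star> k"
      using monic_polys_square_prime_factor[OF less.prems] by blast
    have "m - degree p - degree p < m" using p(2,3) by arith
    then obtain g h j where IH: "2 * j \<le> m - degree p - degree p" "g \<in> monic_polys R j"
      "h \<in> sqfree_monic_polys R (m - degree p - degree p - 2 * j)" "k = g \<star> g \<star> h"
      using less.IH[OF _ k(1)] by blast
    have carriers: "p \<in> carrier (poly_ring R)" "g \<in> carrier (poly_ring R)" "h \<in> carrier (poly_ring R)"
      using p(1) IH(2,3) sqfree_monic_polys_subset monic_polys_carrier by blast+
    have "f = (p \<star> g) \<star> (p \<star> g) \<star> h" using k(2) IH(4) carriers by (simp add: UP.m_ac)
    moreover have "p \<star> g \<in> monic_polys R (degree p + j)" using monic_polys_mult[OF p(1) IH(2)] .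
    \<comment> \<open>stated for a variable \<open>d\<close>: \<open>presburger\<close> gets lost in \<open>degree p = length p - 1\<close>\<close>
    moreover have "2 * (d + j) \<le> m" if "2 * j \<le> m - d - d" "d \<le> m - d" for d
      using that by presburger
    then have "2 * (degree p + j) \<le> m" using IH(1) p(3) by blast
    moreover have "m - 2 * (degree p + j) = m - degree p - degree p - 2 * j" by simp
    ultimately show ?thesis using IH(3) by metis
  qed
qed

lemma sqfree_square_divisor:
  assumes "h \<in> sqfree_monic_polys R a" "g \<in> monic_polys R j" "(g \<star> g) divides\<^bsub>poly_ring R\<^esub> h"
  shows "g = [\<one>]"
proof -
  have "g \<in> Units (poly_ring R)"
    using assms monic_polys_carrier unfolding sqfree_monic_polys_def sqfree_poly_def by blast
  then show ?thesis using assms(2) monic_polys_Units_iff monic_polys_0 by blast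
qed

lemma square_sqfree_cancel_prime:
  assumes p: "ring_prime\<^bsub>poly_ring R\<^esub> p" "p \<in> carrier (poly_ring R)" "p \<noteq> []"
    and carriers: "a1 \<in> carrier (poly_ring R)" "g2 \<in> carrier (poly_ring R)"
      "h1 \<in> carrier (poly_ring R)" "h2 \<in> carrier (poly_ring R)"
    and h2: "sqfree_poly R h2"
    and eq: "(p \<star> a1) \<star> (p \<star> a1) \<star> h1 = g2 \<star> g2 \<star> h2"
  obtains a2 where "a2 \<in> carrier (poly_ring R)" "g2 = p \<star> a2" "a1 \<star> a1 \<star> h1 = a2 \<star> a2 \<star> h2"
proof -
  have "(p \<star> p) divides\<^bsub>poly_ring R\<^esub> g2 \<star> g2 \<star> h2"
    using eq carriers p(2) by (intro dividesI[of "a1 \<star> a1 \<star> h1"]) (auto simp: UP.m_ac)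
  then have "p divides\<^bsub>poly_ring R\<^esub> g2"
    using ring_prime_square_divides[OF p(1,2) carriers(2,4) h2] by blast
  then obtain a2 where a2: "a2 \<in> carrier (poly_ring R)" "g2 = p \<star> a2" unfolding factor_def by blast
  have p_nonzero: "p \<noteq> \<zero>\<^bsub>poly_ring R\<^esub>" using p(3) by (simp add: poly_ring_zero)
  have "p \<star> (p \<star> (a1 \<star> a1 \<star> h1)) = p \<star> (p \<star> (a2 \<star> a2 \<star> h2))"
    using eq a2 carriers p(2) by (simp add: UP.m_ac)
  then have "a1 \<star> a1 \<star> h1 = a2 \<star> a2 \<star> h2"
    using a2 carriers p(2) by (simp add: UP.m_lcancel[OF p_nonzero p(2)])
  then show ?thesis using that a2 by blast
qed

lemma square_sqfree_decomposition_unique: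
  assumes "g1 \<in> monic_polys R j1" "g2 \<in> monic_polys R j2"
    "h1 \<in> sqfree_monic_polys R a" "h2 \<in> sqfree_monic_polys R b" "g1 \<star> g1 \<star> h1 = g2 \<star> g2 \<star> h2"
  shows "g1 = g2 \<and> h1 = h2"
  using assms
proof (induction j1 arbitrary: g1 g2 j2 h1 h2 rule: less_induct)
  case (less j1)
  have carriers: "g1 \<in> carrier (poly_ring R)" "g2 \<in> carrier (poly_ring R)"
    "h1 \<in> carrier (poly_ring R)" "h2 \<in> carrier (poly_ring R)"
    using less.prems(1-4) sqfree_monic_polys_subset monic_polys_carrier by blast+
  show ?case
  proof (cases "j1 = 0")
    case True
    then have g1: "g1 = \<one>\<^bsub>poly_ring R\<^esub>" using less.prems(1) monic_polys_0 by (auto simp: poly_ring_one)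
    then have h1: "h1 = g2 \<star> g2 \<star> h2" using less.prems(5) carriers by simp
    then have "(g2 \<star> g2) divides\<^bsub>poly_ring R\<^esub> h1" using carriers by (intro dividesI[of h2]) auto
    then have "g2 = \<one>\<^bsub>poly_ring R\<^esub>"
      using sqfree_square_divisor[OF less.prems(3,2)] by (simp add: poly_ring_one)
    then show ?thesis using g1 h1 carriers by simp
  next
    case False
    then have "g1 \<notin> Units (poly_ring R)" "g1 \<noteq> []"
      using monic_polys_Units_iff[OF less.prems(1)] less.prems(1) by (auto simp: monic_polys_def)
    then obtain p where p: "p \<in> monic_polys R (degree p)" "degree p > 0"
      "ring_prime\<^bsub>poly_ring R\<^esub> p" "p divides\<^bsub>poly_ring R\<^esub> g1"
      using monic_prime_divisor[OF carriers(1)] by blast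
    have pc: "p \<in> carrier (poly_ring R)" "p \<noteq> []" using p(1) by (auto simp: monic_polys_def)
    obtain a1 where a1: "a1 \<in> carrier (poly_ring R)" "g1 = p \<star> a1"
      using p(4) unfolding factor_def by blast
    obtain a2 where a2: "a2 \<in> carrier (poly_ring R)" "g2 = p \<star> a2"
      and eq: "a1 \<star> a1 \<star> h1 = a2 \<star> a2 \<star> h2"
      using square_sqfree_cancel_prime[OF p(3) pc a1(1) carriers(2-4)] less.prems(4,5) a1(2)
      by (auto simp: sqfree_monic_polys_def)
    have a1_monic: "degree p \<le> j1 \<and> a1 \<in> monic_polys R (j1 - degree p)"
      using monic_polys_factor[OF p(1) a1(1)] a1(2) less.prems(1) by simp
    have a2_monic: "a2 \<in> monic_polys R (j2 - degree p)"
      using monic_polys_factor[OF p(1) a2(1)] a2(2) less.prems(2) by simp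
    have "j1 - degree p < j1" using p(2) False by simp
    then have "a1 = a2 \<and> h1 = h2"
      using less.IH[OF _ conjunct2[OF a1_monic] a2_monic less.prems(3,4) eq] by blast
    then show ?thesis using a1 a2 by simp
  qed
qed

lemma bij_betw_square_sqfree_pairs:
  "bij_betw (\<lambda>(g, h). g \<star> g \<star> h) (square_sqfree_pairs R m) (monic_polys R m)"
proof (rule bij_betw_imageI)
  show "inj_on (\<lambda>(g, h). g \<star> g \<star> h) (square_sqfree_pairs R m)"
    unfolding square_sqfree_pairs_def
    by (rule inj_onI) (clarsimp, metis square_sqfree_decomposition_unique)
  show "(\<lambda>(g, h). g \<star> g \<star> h) ` square_sqfree_pairs R m = monic_polys R m"
  proof (intro equalityI subsetI)
    fix f assume "f \<in> (\<lambda>(g, h). g \<star> g \<star> h) ` square_sqfree_pairs R m"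
    then obtain j g h where j: "j \<le> m div 2" "g \<in> monic_polys R j"
      "h \<in> sqfree_monic_polys R (m - 2 * j)" "f = g \<star> g \<star> h"
      unfolding square_sqfree_pairs_def by auto
    then have "f \<in> monic_polys R (j + j + (m - 2 * j))"
      using monic_polys_mult sqfree_monic_polys_subset by blast
    then show "f \<in> monic_polys R m" using j(1) by (simp add: algebra_simps)
  next
    fix f assume "f \<in> monic_polys R m"
    then obtain g h j where decomp: "2 * j \<le> m" "g \<in> monic_polys R j"
      "h \<in> sqfree_monic_polys R (m - 2 * j)" "f = g \<star> g \<star> h"
      using square_sqfree_decomposition_exists by blast
    moreover have "j \<le> m div 2" using decomp(1) by presburger
    ultimately show "f \<in> (\<lambda>(g, h). g \<star> g \<star> h) ` square_sqfree_pairs R m"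
      unfolding square_sqfree_pairs_def by (auto intro!: image_eqI[of _ _ "(g, h)"])
  qed
qed

lemma poly_ring_carrier_set: "p \<in> carrier (poly_ring R) \<Longrightarrow> set p \<subseteq> carrier R"
  using polynomial_incl poly_ring_carrier_iff by blast

lemma eval_square_times:
  assumes "g \<in> carrier (poly_ring R)" "h \<in> carrier (poly_ring R)" "x \<in> carrier R"
  shows "eval (g \<star> g \<star> h) x = eval g x \<otimes> eval g x \<otimes> eval h x"
proof -
  have "g \<star> g \<in> carrier (poly_ring R)" using assms(1) by simp
  then have "eval (g \<star> g \<star> h) x = eval (g \<star> g) x \<otimes> eval h x"
    using eval_poly_mult[OF poly_ring_carrier_set poly_ring_carrier_set[OF assms(2)] assms(3)]
    by (simp add: univ_poly_mult)
  also have "eval (g \<star> g) x = eval g x \<otimes> eval g x"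
    using eval_poly_mult[OF poly_ring_carrier_set[OF assms(1)] poly_ring_carrier_set[OF assms(1)] assms(3)]
    by (simp add: univ_poly_mult)
  finally show ?thesis .
qed

lemma eval_append_eq_iff:
  assumes l: "set l \<subseteq> carrier R" and a: "a \<in> carrier R" and x: "x \<in> carrier R" and c: "c \<in> carrier R"
  shows "eval (l @ [a]) x = c \<longleftrightarrow> a = c \<ominus> eval l x \<otimes> x"
proof -
  have val: "eval l x \<in> carrier R" using eval_in_carrier[OF l x] .
  have "eval l x \<otimes> x \<oplus> a = c \<longleftrightarrow> a = c \<ominus> eval l x \<otimes> x"
  proof
    assume "eval l x \<otimes> x \<oplus> a = c"
    moreover have "(eval l x \<otimes> x \<oplus> a) \<ominus> eval l x \<otimes> x = a" using val a x by algebra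
    ultimately show "a = c \<ominus> eval l x \<otimes> x" by simp
  next
    assume "a = c \<ominus> eval l x \<otimes> x"
    moreover have "eval l x \<otimes> x \<oplus> (c \<ominus> eval l x \<otimes> x) = c" using val x c by algebra
    ultimately show "eval l x \<otimes> x \<oplus> a = c" by simp
  qed
  then show ?thesis using eval_append_aux[OF l a x] by simp
qed

lemma monic_polys_snoc: "l \<in> monic_polys R k \<Longrightarrow> a \<in> carrier R \<Longrightarrow> l @ [a] \<in> monic_polys R (Suc k)"
  by (simp add: monic_polys_mem)

lemma butlast_monic_polys:
  assumes "f \<in> monic_polys R (Suc k)"
  shows "butlast f \<in> monic_polys R k"
proof -
  have f: "set f \<subseteq> carrier R" "length f = Suc (Suc k)" "hd f = \<one>"
    using assms by (simp_all add: monic_polys_mem)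
  moreover have "hd (butlast f) = hd f" using f(2) by (cases f) auto
  moreover have "butlast f \<noteq> []"
  proof
    assume "butlast f = []"
    then have "length (butlast f) = 0" by simp
    then show False using f(2) by simp
  qed
  ultimately show ?thesis by (auto simp: monic_polys_mem dest: in_set_butlastD)
qed

lemma card_monic_polys_0_eval:
  assumes "x \<in> carrier R"
  shows "card {g \<in> monic_polys R 0. eval g x = b} = (if b = \<one> then 1 else 0)"
proof -
  have "eval [\<one>] x = \<one>" using assms by simp
  then have "{g \<in> monic_polys R 0. eval g x = b} = (if b = \<one> then {[\<one>]} else {})"
    by (auto simp: monic_polys_0)
  then show ?thesis by simp
qed

lemma square_mult_eq_unit_iff:
  assumes "b \<in> carrier R" "e \<in> carrier R" "c \<in> Units R"
  shows "b \<otimes> b \<otimes> e = c \<longleftrightarrow> b \<in> Units R \<and> e = c \<otimes> inv (b \<otimes> b)"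
proof (cases "b \<in> Units R")
  case True
  then have bb: "b \<otimes> b \<in> Units R" by simp
  have "b \<otimes> b \<otimes> e = c \<longleftrightarrow> inv (b \<otimes> b) \<otimes> (b \<otimes> b \<otimes> e) = inv (b \<otimes> b) \<otimes> c"
    using bb assms by (simp add: Units_closed)
  also have "\<dots> \<longleftrightarrow> e = c \<otimes> inv (b \<otimes> b)"
    using bb assms by (simp add: Units_closed m_assoc[of "inv (b \<otimes> b)" "b \<otimes> b" e, symmetric] m_comm[of c])
  finally show ?thesis using True by simp
next
  case False
  then have "b = \<zero>" using assms(1) field_Units by auto
  then show ?thesis using False assms field_Units by auto
qed

end

locale finite_field = field +
  assumes finite_carrier: "finite (carrier R)"
begin

lemma finite_Units: "finite (Units R)"
  using finite_carrier by (rule finite_subset[rotated]) auto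

lemma monic_polys_eq_image:
  "monic_polys R m = (\<lambda>l. \<one> # l) ` {l. set l \<subseteq> carrier R \<and> length l = m}"
proof -
  have "f \<in> monic_polys R m \<longleftrightarrow> f \<in> (\<lambda>l. \<one> # l) ` {l. set l \<subseteq> carrier R \<and> length l = m}" for f
    by (cases f) (auto simp: monic_polys_mem)
  then show ?thesis by blast
qed

lemma finite_monic_polys: "finite (monic_polys R m)"
  unfolding monic_polys_eq_image by (auto intro!: finite_lists_length_eq finite_carrier)

lemma finite_sqfree_monic_polys: "finite (sqfree_monic_polys R m)"
  using finite_monic_polys sqfree_monic_polys_subset by (rule finite_subset[rotated])

lemma card_monic_polys: "card (monic_polys R m) = card (carrier R) ^ m"
  unfolding monic_polys_eq_image
  by (subst card_image) (auto simp: inj_on_def card_lists_length_eq finite_carrier)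

text \<open>Prescribing the value at \<open>x\<close> fixes the constant coefficient; the others are free.\<close>
lemma card_monic_polys_eval:
  assumes x: "x \<in> carrier R" and c: "c \<in> carrier R"
  shows "card {f \<in> monic_polys R (Suc k). eval f x = c} = card (carrier R) ^ k"
proof -
  let ?extend = "\<lambda>l. l @ [c \<ominus> eval l x \<otimes> x]"
  have "bij_betw ?extend (monic_polys R k) {f \<in> monic_polys R (Suc k). eval f x = c}"
  proof (rule bij_betw_byWitness[where f' = butlast])
    show "\<forall>l \<in> monic_polys R k. butlast (?extend l) = l" by simp
    show "\<forall>f \<in> {f \<in> monic_polys R (Suc k). eval f x = c}. ?extend (butlast f) = f"
    proof
      fix f assume f: "f \<in> {f \<in> monic_polys R (Suc k). eval f x = c}"
      then have "f \<noteq> []" "set f \<subseteq> carrier R" by (auto simp: monic_polys_mem)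
      then have split: "f = butlast f @ [last f]"
        and coeffs: "set (butlast f) \<subseteq> carrier R" "last f \<in> carrier R"
        by (auto dest: in_set_butlastD)
      have "last f = c \<ominus> eval (butlast f) x \<otimes> x"
        using eval_append_eq_iff[OF coeffs x c] f split by simp
      then show "?extend (butlast f) = f" using split by simp
    qed
    show "?extend ` monic_polys R k \<subseteq> {f \<in> monic_polys R (Suc k). eval f x = c}"
    proof (rule image_subsetI)
      fix l assume l: "l \<in> monic_polys R k"
      then have coeffs: "set l \<subseteq> carrier R" by (simp add: monic_polys_mem)
      then have "c \<ominus> eval l x \<otimes> x \<in> carrier R" using x c eval_in_carrier by simp
      then show "?extend l \<in> {f \<in> monic_polys R (Suc k). eval f x = c}"
        using monic_polys_snoc[OF l] eval_append_eq_iff[OF coeffs _ x c] by simp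
    qed
    show "butlast ` {f \<in> monic_polys R (Suc k). eval f x = c} \<subseteq> monic_polys R k"
      using butlast_monic_polys by blast
  qed
  then show ?thesis using card_monic_polys[of k] by (simp add: bij_betw_same_card)
qed

lemma finite_square_sqfree_filter:
  "finite {(g, h) \<in> monic_polys R j \<times> sqfree_monic_polys R k. Q g h}"
  by (rule finite_subset[of _ "monic_polys R j \<times> sqfree_monic_polys R k"])
    (auto simp: finite_monic_polys finite_sqfree_monic_polys)

lemma card_monic_polys_filter:
  "card {f \<in> monic_polys R m. P f} =
     (\<Sum>j \<le> m div 2. card {(g, h) \<in> monic_polys R j \<times> sqfree_monic_polys R (m - 2 * j). P (g \<star> g \<star> h)})"
proof -
  let ?F = "\<lambda>(g, h). g \<star> g \<star> h"
  let ?A = "{gh \<in> square_sqfree_pairs R m. P (?F gh)}"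
  note bij = bij_betw_square_sqfree_pairs[of m]
  have "?F ` ?A = {f \<in> ?F ` square_sqfree_pairs R m. P f}" by auto
  then have "{f \<in> monic_polys R m. P f} = ?F ` ?A"
    unfolding bij_betw_imp_surj_on[OF bij] by simp
  moreover have "inj_on ?F ?A"
    using bij_betw_imp_inj_on[OF bij] by (rule inj_on_subset) blast
  ultimately have "card {f \<in> monic_polys R m. P f} = card ?A" by (simp add: card_image)
  also have "?A = (\<Union>j \<le> m div 2.
      {(g, h) \<in> monic_polys R j \<times> sqfree_monic_polys R (m - 2 * j). P (g \<star> g \<star> h)})"
    unfolding square_sqfree_pairs_def by auto
  also have "card \<dots> =
      (\<Sum>j \<le> m div 2. card {(g, h) \<in> monic_polys R j \<times> sqfree_monic_polys R (m - 2 * j). P (g \<star> g \<star> h)})"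
    by (intro card_UN_disjoint finite_atMost ballI finite_square_sqfree_filter)
      (auto dest: monic_polys_disjoint)
  finally show ?thesis .
qed

lemma card_monic_polys_sum:
  "card (carrier R) ^ m = (\<Sum>j \<le> m div 2. card (carrier R) ^ j * card (sqfree_monic_polys R (m - 2 * j)))"
proof -
  have all_pairs: "{(g, h) \<in> A \<times> B. True} = A \<times> B" for A B :: "'a list set" by auto
  show ?thesis
    using card_monic_polys_filter[of m "\<lambda>_. True", unfolded all_pairs]
    by (simp add: card_monic_polys card_cartesian_product)
qed


lemma card_sqfree_monic_polys_pos:
  assumes "m > 0"
  shows "card (sqfree_monic_polys R m) > 0"
proof -
  have "card {\<zero>, \<one>} \<le> card (carrier R)" by (intro card_mono finite_carrier) auto
  then have q: "card (carrier R) \<ge> 2" by simp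
  show ?thesis
  proof (cases "m = 1")
    case True
    then show ?thesis using card_monic_polys_sum[of 1] q by simp
  next
    case False
    then have "2 \<le> m" using assms by simp
    then obtain k where "m = 2 + k" using le_Suc_ex by blast
    then have k: "m = Suc (Suc k)" by simp
    have "card (carrier R) ^ Suc (Suc k) = card (sqfree_monic_polys R (Suc (Suc k))) +
        (\<Sum>j \<le> k div 2. card (carrier R) ^ Suc j * card (sqfree_monic_polys R (k - 2 * j)))"
      using card_monic_polys_sum[of "Suc (Suc k)"]
      by (simp del: sum.atMost_Suc add: sum.atMost_Suc_shift)
    also have "(\<Sum>j \<le> k div 2. card (carrier R) ^ Suc j * card (sqfree_monic_polys R (k - 2 * j)))
        = card (carrier R) ^ Suc k"
      using card_monic_polys_sum[of k] by (simp add: sum_distrib_left mult.assoc)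
    finally have "card (carrier R) ^ Suc (Suc k) =
        card (sqfree_monic_polys R (Suc (Suc k))) + card (carrier R) ^ Suc k" .
    moreover have "card (carrier R) ^ Suc k < card (carrier R) ^ Suc (Suc k)" using q by simp
    ultimately have "card (sqfree_monic_polys R (Suc (Suc k))) > 0" by linarith
    then show ?thesis using k by simp
  qed
qed

lemma card_square_sqfree_eval:
  assumes x: "x \<in> carrier R" and c: "c \<in> Units R"
  shows "card {(g, h) \<in> monic_polys R j \<times> sqfree_monic_polys R k. eval (g \<star> g \<star> h) x = c} =
    (\<Sum>b \<in> Units R. card {g \<in> monic_polys R j. eval g x = b} *
       sqfree_value_count R k x (c \<otimes> inv (b \<otimes> b)))"
proof -
  have "eval (g \<star> g \<star> h) x = c \<longleftrightarrow>
      eval g x \<in> Units R \<and> eval h x = c \<otimes> inv (eval g x \<otimes> eval g x)"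
    if "g \<in> monic_polys R j" "h \<in> sqfree_monic_polys R k" for g h
  proof -
    have "g \<in> carrier (poly_ring R)" "h \<in> carrier (poly_ring R)"
      using that sqfree_monic_polys_subset monic_polys_carrier by blast+
    then show ?thesis
      using eval_square_times[OF _ _ x] square_mult_eq_unit_iff[OF _ _ c]
        eval_in_carrier[OF poly_ring_carrier_set x] by simp
  qed
  then have "{(g, h) \<in> monic_polys R j \<times> sqfree_monic_polys R k. eval (g \<star> g \<star> h) x = c} =
      (\<Union>b \<in> Units R. {g \<in> monic_polys R j. eval g x = b} \<times>
         {h \<in> sqfree_monic_polys R k. eval h x = c \<otimes> inv (b \<otimes> b)})"
    by blast
  also have "card \<dots> = (\<Sum>b \<in> Units R. card ({g \<in> monic_polys R j. eval g x = b} \<times>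
      {h \<in> sqfree_monic_polys R k. eval h x = c \<otimes> inv (b \<otimes> b)}))"
    by (rule card_UN_disjoint) (auto simp: finite_Units finite_monic_polys finite_sqfree_monic_polys)
  finally show ?thesis by (simp add: card_cartesian_product sqfree_value_count_def)
qed

text \<open>Split a monic polynomial of degree \<open>m\<close> with value \<open>c \<noteq> 0\<close> at \<open>x\<close> as \<open>g\<^sup>2 h\<close>;
  the term \<open>j = 0\<close> (i.e. \<open>g = 1\<close>) counts the square-free ones.\<close>
lemma sqfree_value_count_recurrence:
  assumes x: "x \<in> carrier R" and c: "c \<in> Units R" and m: "m > 0"
  shows "card (carrier R) ^ (m - 1) = sqfree_value_count R m x c +
    (\<Sum>j < m div 2. card (carrier R) ^ j * square_scaled_count R (m - 2 * Suc j) x c)"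
proof -
  have "card (carrier R) ^ (m - 1) = card {f \<in> monic_polys R m. eval f x = c}"
    using card_monic_polys_eval[OF x Units_closed[OF c], of "m - 1"] m by simp
  also have "\<dots> = (\<Sum>j \<le> m div 2.
      card {(g, h) \<in> monic_polys R j \<times> sqfree_monic_polys R (m - 2 * j). eval (g \<star> g \<star> h) x = c})"
    by (rule card_monic_polys_filter)
  also have "\<dots> = (\<Sum>j \<le> m div 2. \<Sum>b \<in> Units R. card {g \<in> monic_polys R j. eval g x = b} *
      sqfree_value_count R (m - 2 * j) x (c \<otimes> inv (b \<otimes> b)))"
    by (rule sum.cong[OF refl], rule card_square_sqfree_eval[OF x c])
  also have "\<dots> = (\<Sum>b \<in> Units R. card {g \<in> monic_polys R 0. eval g x = b} *
        sqfree_value_count R m x (c \<otimes> inv (b \<otimes> b))) +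
      (\<Sum>j < m div 2. \<Sum>b \<in> Units R. card {g \<in> monic_polys R (Suc j). eval g x = b} *
        sqfree_value_count R (m - 2 * Suc j) x (c \<otimes> inv (b \<otimes> b)))"
    by (subst sum.atMost_shift) simp
  also have "(\<Sum>b \<in> Units R. card {g \<in> monic_polys R 0. eval g x = b} *
      sqfree_value_count R m x (c \<otimes> inv (b \<otimes> b))) = sqfree_value_count R m x c"
  proof -
    have "(\<Sum>b \<in> Units R. card {g \<in> monic_polys R 0. eval g x = b} *
        sqfree_value_count R m x (c \<otimes> inv (b \<otimes> b))) =
        (\<Sum>b \<in> Units R. if b = \<one> then sqfree_value_count R m x c else 0)"
      using c by (intro sum.cong refl) (simp add: card_monic_polys_0_eval[OF x] Units_closed)
    then show ?thesis by (simp add: finite_Units)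
  qed
  also have "(\<Sum>j < m div 2. \<Sum>b \<in> Units R. card {g \<in> monic_polys R (Suc j). eval g x = b} *
      sqfree_value_count R (m - 2 * Suc j) x (c \<otimes> inv (b \<otimes> b))) =
      (\<Sum>j < m div 2. card (carrier R) ^ j * square_scaled_count R (m - 2 * Suc j) x c)"
    unfolding square_scaled_count_def sum_distrib_left
    by (intro sum.cong refl) (simp add: card_monic_polys_eval[OF x] Units_closed)
  finally show ?thesis .
qed

lemma square_scaled_count_mult_square:
  assumes u: "u \<in> Units R" and c: "c \<in> Units R"
  shows "square_scaled_count R m x (u \<otimes> u \<otimes> c) = square_scaled_count R m x c"
proof -
  have scale: "u \<otimes> u \<otimes> c \<otimes> inv ((u \<otimes> b) \<otimes> (u \<otimes> b)) = c \<otimes> inv (b \<otimes> b)"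
    if b: "b \<in> Units R" for b
  proof -
    have e: "c \<otimes> inv (b \<otimes> b) \<in> carrier R" using b c by (simp add: Units_closed)
    have "b \<otimes> b \<otimes> (c \<otimes> inv (b \<otimes> b)) = c"
      using square_mult_eq_unit_iff[OF Units_closed[OF b] e c] b by simp
    moreover have "(u \<otimes> b) \<otimes> (u \<otimes> b) \<otimes> (c \<otimes> inv (b \<otimes> b)) =
        u \<otimes> u \<otimes> (b \<otimes> b \<otimes> (c \<otimes> inv (b \<otimes> b)))"
      using u b e by (simp add: Units_closed m_ac)
    ultimately have "(u \<otimes> b) \<otimes> (u \<otimes> b) \<otimes> (c \<otimes> inv (b \<otimes> b)) = u \<otimes> u \<otimes> c" by simp
    then show ?thesis
      using square_mult_eq_unit_iff[of "u \<otimes> b" "c \<otimes> inv (b \<otimes> b)" "u \<otimes> u \<otimes> c"] u b c e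
      by (simp add: Units_closed)
  qed
  have "(\<Sum>b \<in> Units R. sqfree_value_count R m x (c \<otimes> inv (b \<otimes> b))) =
      (\<Sum>b \<in> Units R. sqfree_value_count R m x (u \<otimes> u \<otimes> c \<otimes> inv (b \<otimes> b)))"
  proof (rule sum.reindex_bij_witness[where i = "\<lambda>b. inv u \<otimes> b" and j = "\<lambda>b. u \<otimes> b"])
    fix b assume b: "b \<in> Units R"
    show "inv u \<otimes> (u \<otimes> b) = b" "u \<otimes> (inv u \<otimes> b) = b"
      using u b by (simp_all add: Units_closed m_assoc[symmetric])
    show "u \<otimes> b \<in> Units R" "inv u \<otimes> b \<in> Units R" using u b by simp_all
    show "sqfree_value_count R m x (u \<otimes> u \<otimes> c \<otimes> inv (u \<otimes> b \<otimes> (u \<otimes> b))) =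
        sqfree_value_count R m x (c \<otimes> inv (b \<otimes> b))"
      using scale[OF b] by simp
  qed
  then show ?thesis unfolding square_scaled_count_def by simp
qed

lemma sqfree_value_count_mult_square:
  assumes x: "x \<in> carrier R" and u: "u \<in> Units R" and c: "c \<in> Units R" and m: "m > 0"
  shows "sqfree_value_count R m x (u \<otimes> u \<otimes> c) = sqfree_value_count R m x c"
proof -
  have "(\<Sum>j < m div 2. card (carrier R) ^ j * square_scaled_count R (m - 2 * Suc j) x (u \<otimes> u \<otimes> c)) =
      (\<Sum>j < m div 2. card (carrier R) ^ j * square_scaled_count R (m - 2 * Suc j) x c)"
    by (simp add: square_scaled_count_mult_square[OF u c])
  moreover have "u \<otimes> u \<otimes> c \<in> Units R" using u c by simp
  then have "card (carrier R) ^ (m - 1) = sqfree_value_count R m x (u \<otimes> u \<otimes> c) +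
      (\<Sum>j < m div 2. card (carrier R) ^ j * square_scaled_count R (m - 2 * Suc j) x (u \<otimes> u \<otimes> c))"
    by (rule sqfree_value_count_recurrence[OF x _ m])
  ultimately show ?thesis using sqfree_value_count_recurrence[OF x c m] by linarith
qed

text \<open>For odd \<open>m\<close> every term \<open>m - 2(j + 1)\<close> of the recurrence is odd again.\<close>
lemma sqfree_value_count_odd_degree:
  assumes x: "x \<in> carrier R" and "odd m" "c \<in> Units R" "c' \<in> Units R"
  shows "sqfree_value_count R m x c = sqfree_value_count R m x c'"
  using assms(2-4)
proof (induction m arbitrary: c c' rule: less_induct)
  case (less m)
  have m: "m > 0" using less.prems(1) by (cases m) auto
  have "square_scaled_count R (m - 2 * Suc j) x c = square_scaled_count R (m - 2 * Suc j) x c'"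
    if "j < m div 2" for j
    unfolding square_scaled_count_def
  proof (rule sum.cong[OF refl])
    fix b assume b: "b \<in> Units R"
    have "m - 2 * Suc j < m" "odd (m - 2 * Suc j)" using that less.prems(1) m by (auto elim!: oddE)
    moreover have "c \<otimes> inv (b \<otimes> b) \<in> Units R" "c' \<otimes> inv (b \<otimes> b) \<in> Units R"
      using b less.prems(2,3) by simp_all
    ultimately show "sqfree_value_count R (m - 2 * Suc j) x (c \<otimes> inv (b \<otimes> b)) =
        sqfree_value_count R (m - 2 * Suc j) x (c' \<otimes> inv (b \<otimes> b))"
      using less.IH by blast
  qed
  then have "(\<Sum>j < m div 2. card (carrier R) ^ j * square_scaled_count R (m - 2 * Suc j) x c) =
      (\<Sum>j < m div 2. card (carrier R) ^ j * square_scaled_count R (m - 2 * Suc j) x c')"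
    by simp
  then show ?case
    using sqfree_value_count_recurrence[OF x less.prems(2) m]
      sqfree_value_count_recurrence[OF x less.prems(3) m] by linarith
qed

lemma sqfree_value_count_pow:
  fixes d :: nat
  assumes x: "x \<in> carrier R" and y: "y \<in> carrier R"
    and n: "n > 0" and d: "d > 0" and odd: "odd n \<or> odd d"
  shows "sqfree_value_count R n x (y [^] d) = sqfree_value_count R n x y"
proof (cases "y \<in> Units R")
  case False
  then have "y = \<zero>" using y field_Units by auto
  moreover have "d \<noteq> 0" using d by simp
  ultimately show ?thesis using nat_pow_zero by simp
next
  case unit: True
  show ?thesis
  proof (cases "odd d")
    case True
    then obtain t where "d = Suc (2 * t)" by (metis oddE Suc_eq_plus1 add.commute)
    then have "y [^] d = y [^] t \<otimes> y [^] t \<otimes> y"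
      using y by (simp add: nat_pow_mult[symmetric] mult_2)
    then show ?thesis
      using sqfree_value_count_mult_square[OF x Units_pow_closed[OF unit] unit n] by simp
  next
    case False
    then have "odd n" using odd by simp
    then show ?thesis using sqfree_value_count_odd_degree[OF x] unit Units_pow_closed by blast
  qed
qed

lemma sum_sqfree_value_count:
  assumes x: "x \<in> carrier R"
  shows "(\<Sum>c \<in> carrier R. sqfree_value_count R n x c) = card (sqfree_monic_polys R n)"
proof -
  have "sqfree_monic_polys R n = (\<Union>c \<in> carrier R. {h \<in> sqfree_monic_polys R n. eval h x = c})"
    using eval_in_carrier[OF poly_ring_carrier_set[OF monic_polys_carrier] x]
      sqfree_monic_polys_subset by blast
  also have "card \<dots> = (\<Sum>c \<in> carrier R. sqfree_value_count R n x c)"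
    unfolding sqfree_value_count_def
    by (rule card_UN_disjoint) (auto simp: finite_carrier finite_sqfree_monic_polys)
  finally show ?thesis by simp
qed

lemma sum_card_curve_points:
  assumes "n > 0" "d > 0" "odd n \<or> odd d"
  shows "(\<Sum>f \<in> sqfree_monic_polys R n. card (curve_points R d f)) =
    card (carrier R) * card (sqfree_monic_polys R n)"
proof -
  have "card (curve_points R d f) = (\<Sum>x \<in> carrier R. card {y \<in> carrier R. y [^] d = eval f x})" for f
  proof -
    have "curve_points R d f = Sigma (carrier R) (\<lambda>x. {y \<in> carrier R. y [^] d = eval f x})"
      unfolding curve_points_def by auto
    then show ?thesis by (simp add: card_SigmaI finite_carrier)
  qed
  then have "(\<Sum>f \<in> sqfree_monic_polys R n. card (curve_points R d f)) =
      (\<Sum>x \<in> carrier R. \<Sum>f \<in> sqfree_monic_polys R n. card {y \<in> carrier R. y [^] d = eval f x})"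
    by (simp add: sum.swap[of _ _ "carrier R"])
  also have "\<dots> = (\<Sum>x \<in> carrier R. \<Sum>y \<in> carrier R. sqfree_value_count R n x (y [^] d))"
    unfolding sqfree_value_count_def
    by (intro sum.cong refl, subst sum_card_filter_swap[OF finite_sqfree_monic_polys finite_carrier])
      (simp add: eq_commute)
  also have "\<dots> = (\<Sum>x \<in> carrier R. \<Sum>y \<in> carrier R. sqfree_value_count R n x y)"
    using sqfree_value_count_pow[OF _ _ assms] by simp
  also have "\<dots> = card (carrier R) * card (sqfree_monic_polys R n)"
    by (simp add: sum_sqfree_value_count)
  finally show ?thesis .
qed

end

theorem corollary1p3:
  fixes n d :: nat
  assumes "n > 0" and "d > 0" and "odd n \<or> odd d"
  shows "\<exists>S :: nat set. finite S \<and>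
           (\<forall>p. Factorial_Ring.prime p \<and> p \<notin> S \<longrightarrow>
              (\<forall>(F :: nat ring) k. field F \<and> k > 0 \<and> card (carrier F) = p ^ k \<longrightarrow>
                 (\<Sum>f \<in> Conf F n. real (card (curve_points F d f))) / real (card (Conf F n))
                   = real (card (carrier F))))"
proof (intro exI[of _ "{}"] conjI allI impI)
  show "finite ({} :: nat set)" by simp
next
  fix p :: nat and F :: "nat ring" and k :: nat
  assume "Factorial_Ring.prime p \<and> p \<notin> {}" and F: "field F \<and> k > 0 \<and> card (carrier F) = p ^ k"
  then have "card (carrier F) > 0" using prime_gt_0_nat by simp
  then have "finite (carrier F)" by (rule card_ge_0_finite)
  then interpret F: finite_field F
    using F by (intro finite_field.intro finite_field_axioms.intro) auto
  have Conf: "Conf F n = sqfree_monic_polys F n" using Conf_eq_sqfree_monic_polys[OF assms(1)] .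
  have "(\<Sum>f \<in> Conf F n. real (card (curve_points F d f))) =
      real (card (carrier F)) * real (card (Conf F n))"
    using F.sum_card_curve_points[OF assms] unfolding Conf by (simp flip: of_nat_sum of_nat_mult)
  then show "(\<Sum>f \<in> Conf F n. real (card (curve_points F d f))) / real (card (Conf F n)) =
      real (card (carrier F))"
    using F.card_sqfree_monic_polys_pos[OF assms(1)] unfolding Conf by simp
qed

end
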